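(* Let $\lambda\in\mathbb R$ and $\gamma\in[0,\tfrac12]$, and for $\delta\in[\gamma/2,\tfrac12]$ define \[\vartheta^\star(\delta)=2\big(\lambda+H(\delta)-1\big)+(1-\gamma)\Big(1-H\Big(\frac{\delta-\gamma/2}{1-\gamma}\Big)\Big)\] (for $\gamma=1$ not applicable; here $1-\gamma\ge \tfrac12$). Then $\vartheta^\star$ attains its minimum over $[\gamma/2,\tfrac12]$ at $\delta_{\min}=\tfrac12\big(1-\sqrt{1-2\gamma}\big)$, and $\vartheta^\star(\delta_{\min})=2\lambda+H(\gamma)-1$.
   Context: All logarithms are base 2. $H(x)=-x\log x-(1-x)\log(1-x)$ for $x\in(0,1)$, $H(0)=H(1)=0$. *)

theory Defs
  imports Complex_Main
begin

definition H :: "real \<Rightarrow> real" where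
  "H x = (if x = 0 \<or> x = 1 then 0 else - x * log 2 x - (1 - x) * log 2 (1 - x))"

definition theta_star :: "real \<Rightarrow> real \<Rightarrow> real \<Rightarrow> real" where
  "theta_star lam \<gamma> \<delta> =
     2 * (lam + H \<delta> - 1) + (1 - \<gamma>) * (1 - H ((\<delta> - \<gamma> / 2) / (1 - \<gamma>)))"

end

theory Submission
  imports Defs
begin

text \<open>Up to the constant \<open>2\<lambda> + H \<gamma> - 1\<close>, \<open>theta_star\<close> at \<open>\<delta>\<close> is \<open>2 H \<delta> - H P\<^sub>\<delta>\<close>, where
  \<open>P\<^sub>\<delta>\<close> is the distribution on \<open>{0,1}\<^sup>2\<close> with weights \<open>\<delta> - \<gamma>/2, \<gamma>/2, \<gamma>/2, 1 - \<delta> - \<gamma>/2\<close>: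
  this is the grouping rule for entropy, splitting \<open>P\<^sub>\<delta>\<close> by whether the two coordinates agree.
  Both marginals of \<open>P\<^sub>\<delta>\<close> are \<open>(\<delta>, 1 - \<delta>)\<close>, so subadditivity of entropy (Gibbs' inequality
  against the product of the marginals) gives \<open>H P\<^sub>\<delta> \<le> 2 H \<delta>\<close>, with equality when \<open>P\<^sub>\<delta>\<close> is that
  product, i.e. when \<open>\<delta>\<^sup>2 = \<delta> - \<gamma>/2\<close>. The root of this quadratic in \<open>[\<gamma>/2, 1/2]\<close> is \<open>\<delta>min\<close>.\<close>

definition entropy_summand :: "real \<Rightarrow> real" where
  "entropy_summand p = - p * log 2 p"

lemma entropy_summand_mult:
  assumes "0 \<le> a" "0 \<le> b"
  shows "entropy_summand (a * b) = a * entropy_summand b + b * entropy_summand a"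
  using assms unfolding entropy_summand_def
  by (cases "a = 0 \<or> b = 0") (auto simp: log_mult algebra_simps)

lemma entropy_summand_half: "entropy_summand (1/2) = 1/2"
  unfolding entropy_summand_def by (simp add: log_divide)

lemma H_eq_entropy_summands: "H x = entropy_summand x + entropy_summand (1 - x)"
  unfolding H_def entropy_summand_def by (auto simp: algebra_simps)

lemma entropy_summand_le_cross_entropy:
  assumes "0 \<le> p" "0 \<le> q" "q = 0 \<longrightarrow> p = 0"
  shows "entropy_summand p \<le> - p * log 2 q + (q - p) / ln 2"
proof (cases "p = 0")
  case True
  then show ?thesis using assms by (simp add: entropy_summand_def)
next
  case False
  with assms have p: "p > 0" and q: "q > 0" by auto
  have "p * ln (q / p) \<le> p * (q / p - 1)"
    using p q by (intro mult_left_mono ln_le_minus_one) auto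
  then have "p * ln q - p * ln p \<le> q - p"
    using p q by (simp add: ln_div algebra_simps)
  then have "(p * ln q - p * ln p) / ln 2 \<le> (q - p) / ln 2"
    by (intro divide_right_mono) auto
  then show ?thesis
    unfolding entropy_summand_def log_def by (simp add: diff_divide_distrib)
qed

lemma mult_log_mult:
  assumes "0 \<le> a" "0 \<le> b" "a * b = 0 \<longrightarrow> p = 0"
  shows "p * log 2 (a * b) = p * log 2 a + p * log 2 b"
  using assms by (cases "p = 0") (auto simp: log_mult algebra_simps)

lemma H_grouping:
  assumes "0 \<le> g" "g < 1" "g/2 \<le> d" "d \<le> 1 - g/2"
  shows "H g + g + (1 - g) * H ((d - g/2) / (1 - g))
    = 2 * entropy_summand (g/2) + entropy_summand (d - g/2) + entropy_summand (1 - d - g/2)"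
proof -
  define u where "u = (d - g/2) / (1 - g)"
  have u: "0 \<le> u" "u \<le> 1" using assms by (auto simp: u_def field_simps)
  have "d - g/2 = (1 - g) * u" and "1 - d - g/2 = (1 - g) * (1 - u)"
    using assms by (simp_all add: u_def field_simps)
  then have "entropy_summand (d - g/2) = (1 - g) * entropy_summand u + u * entropy_summand (1 - g)"
    and "entropy_summand (1 - d - g/2)
      = (1 - g) * entropy_summand (1 - u) + (1 - u) * entropy_summand (1 - g)"
    using assms u by (simp_all add: entropy_summand_mult)
  moreover have "entropy_summand (g/2) = g/2 + entropy_summand g / 2"
    using entropy_summand_mult[of g "1/2"] entropy_summand_half assms by simp
  ultimately show ?thesis
    unfolding u_def[symmetric] H_eq_entropy_summands by (simp add: algebra_simps)
qed

lemma entropy_summands_le_marginals: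
  assumes "0 \<le> g" "g/2 \<le> d" "d \<le> 1 - g/2"
  shows "2 * entropy_summand (g/2) + entropy_summand (d - g/2) + entropy_summand (1 - d - g/2)
    \<le> 2 * H d"
proof -
  have d: "0 \<le> d" "0 \<le> 1 - d" "d = 0 \<longrightarrow> g = 0" "d = 1 \<longrightarrow> g = 0"
    using assms by auto
  have "entropy_summand (d - g/2) \<le> - (d - g/2) * log 2 (d * d) + (d * d - (d - g/2)) / ln 2"
    and "entropy_summand (g/2) \<le> - (g/2) * log 2 (d * (1 - d)) + (d * (1 - d) - g/2) / ln 2"
    and "entropy_summand (1 - d - g/2)
      \<le> - (1 - d - g/2) * log 2 ((1 - d) * (1 - d)) + ((1 - d) * (1 - d) - (1 - d - g/2)) / ln 2"
    using assms d by (intro entropy_summand_le_cross_entropy; simp)+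
  moreover have "(d * d - (d - g/2)) / ln 2 + 2 * ((d * (1 - d) - g/2) / ln 2)
      + ((1 - d) * (1 - d) - (1 - d - g/2)) / ln 2 = 0"
    by (simp add: divide_simps) (simp add: algebra_simps)
  ultimately have "2 * entropy_summand (g/2) + entropy_summand (d - g/2) + entropy_summand (1 - d - g/2)
    \<le> - (d - g/2) * log 2 (d * d) - g * log 2 (d * (1 - d))
      - (1 - d - g/2) * log 2 ((1 - d) * (1 - d))"
    by linarith
  also have "\<dots> = 2 * H d"
  proof -
    have "(d - g/2) * log 2 (d * d) = (d - g/2) * log 2 d + (d - g/2) * log 2 d"
      and "g * log 2 (d * (1 - d)) = g * log 2 d + g * log 2 (1 - d)"
      and "(1 - d - g/2) * log 2 ((1 - d) * (1 - d))
        = (1 - d - g/2) * log 2 (1 - d) + (1 - d - g/2) * log 2 (1 - d)"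
      using d by (intro mult_log_mult; simp)+
    then show ?thesis
      unfolding H_eq_entropy_summands entropy_summand_def by (simp add: algebra_simps)
  qed
  finally show ?thesis .
qed

lemma entropy_summands_eq_marginals:
  assumes "0 \<le> d" "d \<le> 1" "g/2 = d * (1 - d)"
  shows "2 * entropy_summand (g/2) + entropy_summand (d - g/2) + entropy_summand (1 - d - g/2)
    = 2 * H d"
proof -
  have "d - g/2 = d * d" and "1 - d - g/2 = (1 - d) * (1 - d)"
    using assms(3) by (simp_all add: algebra_simps)
  with assms show ?thesis
    unfolding H_eq_entropy_summands
    by (simp only: entropy_summand_mult) (simp add: algebra_simps)
qed

lemma theta_star_eq:
  assumes "0 \<le> \<gamma>" "\<gamma> < 1" "\<gamma>/2 \<le> \<delta>" "\<delta> \<le> 1 - \<gamma>/2"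
  shows "theta_star lam \<gamma> \<delta> = 2 * lam + H \<gamma> - 1 + 2 * H \<delta>
    - (2 * entropy_summand (\<gamma>/2) + entropy_summand (\<delta> - \<gamma>/2) + entropy_summand (1 - \<delta> - \<gamma>/2))"
  using H_grouping[OF assms] unfolding theta_star_def by (simp add: algebra_simps)

lemma delta_min_bounds:
  assumes "0 \<le> \<gamma>" "\<gamma> \<le> 1/2"
  shows "(1 - sqrt (1 - 2 * \<gamma>)) / 2 \<in> {\<gamma>/2..1/2}"
proof -
  have "sqrt (1 - 2 * \<gamma>) \<le> sqrt ((1 - \<gamma>)\<^sup>2)"
    by (simp add: power2_eq_square algebra_simps)
  then show ?thesis using assms by simp
qed

lemma delta_min_root:
  assumes "\<gamma> \<le> 1/2"
  shows "\<gamma>/2 = (1 - sqrt (1 - 2 * \<gamma>)) / 2 * (1 - (1 - sqrt (1 - 2 * \<gamma>)) / 2)"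
proof -
  have "(sqrt (1 - 2 * \<gamma>))\<^sup>2 = 1 - 2 * \<gamma>" using assms by simp
  then show ?thesis by (simp add: field_simps power2_eq_square)
qed

theorem mainTheorem4:
  fixes lam \<gamma> :: real
  assumes "0 \<le> \<gamma>" and "\<gamma> \<le> 1/2"
  defines "\<delta>min \<equiv> (1 - sqrt (1 - 2 * \<gamma>)) / 2"
  shows "\<delta>min \<in> {\<gamma>/2..1/2}
    \<and> (\<forall>\<delta>\<in>{\<gamma>/2..1/2}. theta_star lam \<gamma> \<delta>min \<le> theta_star lam \<gamma> \<delta>)
    \<and> theta_star lam \<gamma> \<delta>min = 2 * lam + H \<gamma> - 1"
proof -
  have range: "\<delta>min \<in> {\<gamma>/2..1/2}"
    unfolding \<delta>min_def using assms(1,2) by (rule delta_min_bounds)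
  have "\<gamma>/2 = \<delta>min * (1 - \<delta>min)"
    unfolding \<delta>min_def using assms(2) by (rule delta_min_root)
  then have "2 * entropy_summand (\<gamma>/2) + entropy_summand (\<delta>min - \<gamma>/2)
      + entropy_summand (1 - \<delta>min - \<gamma>/2) = 2 * H \<delta>min"
    using range assms(1) by (intro entropy_summands_eq_marginals) auto
  then have min_value: "theta_star lam \<gamma> \<delta>min = 2 * lam + H \<gamma> - 1"
    using range assms(1,2) theta_star_eq[of \<gamma> \<delta>min lam] by simp
  have "theta_star lam \<gamma> \<delta>min \<le> theta_star lam \<gamma> \<delta>" if "\<delta> \<in> {\<gamma>/2..1/2}" for \<delta>
    using that assms(1,2) entropy_summands_le_marginals[of \<gamma> \<delta>] theta_star_eq[of \<gamma> \<delta> lam]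
    by (simp add: min_value)
  with range min_value show ?thesis by blast
qed

end
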